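(* A frame $L$ is subfit if and only if each $S\in\mathfrak{B}(\mathrm{coS}(L))$ is a meet in $\mathrm{coS}(L)$ of closed sublocales.
   Context: A frame $L$ is subfit if for all $a,b\in L$ with $a\not\le b$ there is $c\in L$ with $a\vee c=1\ne b\vee c$. A sublocale of $L$ is a subset $S\subseteq L$ closed under arbitrary meets and such that $x\to s\in S$ for all $x\in L$, $s\in S$. $\mathrm{coS}(L)$ is the set of all sublocales of $L$ ordered by reverse inclusion; it is a frame, whose meets are the joins of sublocales under inclusion ($\bigwedge S_i=\{\bigwedge M\mid M\subseteq\bigcup S_i\}$). For $a\in L$, the closed sublocale is $\mathfrak{c}(a)=\{x\in L\mid x\ge a\}$. For a frame $M$, $\mathfrak{B}(M)=\{x\in M\mid x=x^{\ast\ast}\}$, where $^\ast$ is pseudocomplement in $M$. *)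

theory Defs
  imports Main
begin

text \<open>A frame: a complete lattice in which binary meets distribute over arbitrary joins.
  The frame L is the whole carrier of the type.\<close>
class frame = complete_lattice +
  assumes inf_Sup_frame: "inf a (Sup S) = Sup ((\<lambda>b. inf a b) ` S)"

definition subfit :: "'a::frame itself \<Rightarrow> bool" where
  "subfit _ \<longleftrightarrow> (\<forall>a b :: 'a. \<not> a \<le> b \<longrightarrow>
      (\<exists>c. sup a c = top \<and> sup b c \<noteq> top))"

definition himp :: "'a::frame \<Rightarrow> 'a \<Rightarrow> 'a" where
  "himp x s = Sup {y. inf y x \<le> s}"

definition is_sublocale :: "'a::frame set \<Rightarrow> bool" where
  "is_sublocale S \<longleftrightarrow> (\<forall>M. M \<subseteq> S \<longrightarrow> Inf M \<in> S) \<and> (\<forall>x s. s \<in> S \<longrightarrow> himp x s \<in> S)"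

text \<open>coS(L): sublocales ordered by reverse inclusion. Meets in coS(L) are joins of
  sublocales under inclusion.\<close>
definition coS_Meet :: "'a::frame set set \<Rightarrow> 'a set" where
  "coS_Meet F = {Inf M | M. M \<subseteq> \<Union>F}"

definition coS_meet :: "'a::frame set \<Rightarrow> 'a set \<Rightarrow> 'a set" where
  "coS_meet S T = coS_Meet {S, T}"

text \<open>Bottom of coS(L) is the whole frame L (= UNIV). Pseudocomplement in coS(L):
  the coS-greatest (i.e. inclusion-smallest) is_sublocale T with T \<and> S = 0.\<close>
definition coS_pc :: "'a::frame set \<Rightarrow> 'a set" where
  "coS_pc S = (THE T. is_sublocale T \<and> coS_meet T S = UNIV \<and>
       (\<forall>U. is_sublocale U \<and> coS_meet U S = UNIV \<longrightarrow> T \<subseteq> U))"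

definition Bool_coS :: "'a::frame set set" where
  "Bool_coS = {S. is_sublocale S \<and> S = coS_pc (coS_pc S)}"

definition closed_sub :: "'a::frame \<Rightarrow> 'a set" where
  "closed_sub a = {x. a \<le> x}"

end

theory Submission
  imports Defs
begin

(* Let nu_T x be the least element of the sublocale T above x. Since
   x = nu_T x /\ (nu_T x -> x), a sublocale U satisfies U /\ T = 0 in coS(L) iff U contains
   every nu_T x -> x. For T = c(a) and for the open sublocale T = o(a) = {x. a -> x = x} this
   shows that c(a) and o(a) are each other's pseudocomplements, so every o(a) is Boolean.
   Subfitness says precisely that every o(a) is the coS(L)-meet of the closed sublocales c(c)
   with a \/ c = 1.
   Conversely, let S = T* be Boolean and let K be the coS(L)-meet of all closed sublocales
   contained in S. Clearly K is contained in S; and K /\ T = 0, which gives the reverse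
   inclusion: nu_T x -> x lies in o(nu_T x), a meet of closed c(c) with nu_T x \/ c = 1, and
   every w above such a c and above nu_T x -> x has nu_T w = 1, which forces w into S. *)

context frame begin

subclass distrib_lattice
proof
  have "inf x (sup y z) = sup (inf x y) (inf x z)" for x y z :: 'a
    using inf_Sup_frame[of x "{y, z}"] by simp
  then show "sup x (inf y z) = inf (sup x y) (sup x z)" for x y z :: 'a
    by (rule distrib_imp1)
qed

end

lemma eq_if_same_lower_bounds: "(\<And>y. y \<le> p \<longleftrightarrow> y \<le> q) \<Longrightarrow> p = (q::'a::order)"
  by (meson order.antisym order.refl)

lemma le_himp_iff: "y \<le> himp x s \<longleftrightarrow> inf y x \<le> (s::'a::frame)"
proof
  assume "y \<le> himp x s"
  then have "inf y x \<le> inf x (himp x s)" by (simp add: inf_commute le_infI2)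
  also have "\<dots> = Sup ((\<lambda>b. inf x b) ` {y. inf y x \<le> s})"
    unfolding himp_def by (rule inf_Sup_frame)
  also have "\<dots> \<le> s" by (auto intro!: Sup_least simp: inf_commute)
  finally show "inf y x \<le> s" .
next
  assume "inf y x \<le> s"
  then show "y \<le> himp x s" unfolding himp_def by (auto intro: Sup_upper)
qed

lemma le_himp: "(x::'a::frame) \<le> himp a x"
  by (simp add: le_himp_iff)

lemma himp_eq_top: "(a::'a::frame) \<le> x \<Longrightarrow> himp a x = top"
  by (simp add: order.antisym le_himp_iff le_infI2)

lemma himp_top_left: "himp top (x::'a::frame) = x"
  by (rule eq_if_same_lower_bounds) (simp add: le_himp_iff)

lemma inf_himp: "inf (a::'a::frame) (himp a x) = inf a x"
proof (rule order.antisym)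
  show "inf a (himp a x) \<le> inf a x"
    using le_himp_iff [of "himp a x" a x] by (simp add: inf_commute)
  show "inf a x \<le> inf a (himp a x)"
    by (simp add: le_infI2 le_himp)
qed

lemma himp_mono: "(x::'a::frame) \<le> y \<Longrightarrow> himp a x \<le> himp a y"
  by (metis inf_commute inf_himp inf_le2 le_himp_iff order.trans)

lemma himp_himp: "himp (a::'a::frame) (himp b s) = himp (inf a b) s"
  by (rule eq_if_same_lower_bounds) (simp add: le_himp_iff inf_assoc inf_commute inf_left_commute)

lemma himp_Inf: "himp (a::'a::frame) (Inf N) = Inf (himp a ` N)"
  by (rule eq_if_same_lower_bounds) (simp add: le_himp_iff le_Inf_iff)

lemma himp_inf_eq_if_le: "a \<le> t \<Longrightarrow> himp a (inf t u) = himp a (u::'a::frame)"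
  by (rule eq_if_same_lower_bounds) (meson le_himp_iff inf_le2 le_inf_iff order.trans)

lemma himp_sup_left_self: "himp (sup a x) x = himp a (x::'a::frame)"
  by (rule eq_if_same_lower_bounds) (simp add: le_himp_iff inf_sup_distrib1)

lemma is_sublocale_Inter: "(\<And>U. U \<in> F \<Longrightarrow> is_sublocale U) \<Longrightarrow> is_sublocale (\<Inter>F)"
  unfolding is_sublocale_def by (metis InterE InterI subset_iff)

lemma is_sublocale_closed_sub: "is_sublocale (closed_sub (a::'a::frame))"
  unfolding is_sublocale_def closed_sub_def
  by (auto intro: Inf_greatest order.trans [OF _ le_himp])

definition open_sub :: "'a::frame \<Rightarrow> 'a set" where
  "open_sub a = {x. himp a x = x}"

lemma himp_mem_open_sub: "himp a x \<in> open_sub (a::'a::frame)"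
  unfolding open_sub_def by (simp add: himp_himp)

lemma is_sublocale_open_sub: "is_sublocale (open_sub (a::'a::frame))"
  unfolding is_sublocale_def
proof (intro conjI allI impI)
  fix M assume "M \<subseteq> open_sub a"
  then have "himp a ` M = M" by (force simp: open_sub_def)
  then show "Inf M \<in> open_sub a" by (simp add: open_sub_def himp_Inf)
next
  fix x s assume "s \<in> open_sub a"
  then have "himp x s = himp x (himp a s)" by (simp add: open_sub_def)
  also have "\<dots> = himp a (himp x s)" by (simp add: himp_himp inf_commute)
  finally show "himp x s \<in> open_sub a" by (metis himp_mem_open_sub)
qed

lemma closed_sub_subset_open_sub_iff: "closed_sub c \<subseteq> open_sub a \<longleftrightarrow> sup a c = (top::'a::frame)"
proof
  assume "closed_sub c \<subseteq> open_sub a"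
  then have "sup a c \<in> open_sub a" by (auto simp: closed_sub_def)
  then show "sup a c = top" by (simp add: open_sub_def himp_eq_top)
next
  assume ac: "sup a c = top"
  have "himp a y = y" if "c \<le> y" for y
  proof (rule order.antisym)
    have "sup a y = top" using ac \<open>c \<le> y\<close> by (metis sup.mono order.refl top_unique)
    then have "himp a y = inf (sup a y) (himp a y)" by simp
    also have "\<dots> = sup (inf a (himp a y)) (inf y (himp a y))" by (rule inf_sup_distrib2)
    also have "\<dots> \<le> y" by (simp add: inf_himp)
    finally show "himp a y \<le> y" .
  qed (rule le_himp)
  then show "closed_sub c \<subseteq> open_sub a" by (auto simp: closed_sub_def open_sub_def)
qed

lemma mem_coS_Meet_iff: "x \<in> coS_Meet F \<longleftrightarrow> (x::'a::frame) = Inf {y \<in> \<Union>F. x \<le> y}"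
proof
  assume "x \<in> coS_Meet F"
  then obtain N where N: "x = Inf N" "N \<subseteq> \<Union>F" unfolding coS_Meet_def by auto
  have "Inf {y \<in> \<Union>F. x \<le> y} \<le> Inf N"
    by (rule Inf_superset_mono) (use N in \<open>auto intro: Inf_lower\<close>)
  with N(1) show "x = Inf {y \<in> \<Union>F. x \<le> y}"
    by (auto intro!: order.antisym Inf_greatest)
next
  assume "x = Inf {y \<in> \<Union>F. x \<le> y}"
  then show "x \<in> coS_Meet F" unfolding coS_Meet_def by blast
qed

lemma subset_coS_Meet: "S \<in> F \<Longrightarrow> S \<subseteq> coS_Meet (F::'a::frame set set)"
  unfolding coS_Meet_def by (auto intro!: exI [of _ "{_}"])

lemma coS_Meet_least:
  assumes "is_sublocale S" and "\<And>U. U \<in> F \<Longrightarrow> U \<subseteq> S"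
  shows "coS_Meet F \<subseteq> (S::'a::frame set)"
proof
  fix x assume "x \<in> coS_Meet F"
  then obtain M where "x = Inf M" "M \<subseteq> \<Union>F" unfolding coS_Meet_def by blast
  moreover from \<open>M \<subseteq> \<Union>F\<close> assms(2) have "M \<subseteq> S" by blast
  ultimately show "x \<in> S" using assms(1) unfolding is_sublocale_def by blast
qed

lemma Inf_mem_coS_Meet: "M \<subseteq> coS_Meet F \<Longrightarrow> Inf M \<in> coS_Meet (F::'a::frame set set)"
proof -
  assume M: "M \<subseteq> coS_Meet F"
  let ?X = "Inf M"
  have "Inf {y \<in> \<Union>F. ?X \<le> y} \<le> m" if "m \<in> M" for m
  proof -
    have "Inf {y \<in> \<Union>F. ?X \<le> y} \<le> Inf {y \<in> \<Union>F. m \<le> y}"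
      using \<open>m \<in> M\<close> by (intro Inf_superset_mono) (auto intro: order.trans [OF Inf_lower])
    also have "\<dots> = m" using M \<open>m \<in> M\<close> by (metis mem_coS_Meet_iff subsetD)
    finally show ?thesis .
  qed
  then have "?X = Inf {y \<in> \<Union>F. ?X \<le> y}"
    by (intro order.antisym Inf_greatest) auto
  then show ?thesis by (rule mem_coS_Meet_iff [THEN iffD2])
qed

lemma is_sublocale_coS_Meet:
  assumes "\<And>U. U \<in> F \<Longrightarrow> is_sublocale U"
  shows "is_sublocale (coS_Meet (F::'a::frame set set))"
  unfolding is_sublocale_def
proof (intro conjI allI impI)
  fix M assume "M \<subseteq> coS_Meet F"
  then show "Inf M \<in> coS_Meet F" by (rule Inf_mem_coS_Meet)
next
  fix x s assume "s \<in> coS_Meet F"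
  then obtain N where N: "s = Inf N" "N \<subseteq> \<Union>F" unfolding coS_Meet_def by auto
  have "himp x n \<in> \<Union>F" if "n \<in> N" for n
  proof -
    obtain U where "U \<in> F" "n \<in> U" using N(2) \<open>n \<in> N\<close> by blast
    with assms show ?thesis unfolding is_sublocale_def by blast
  qed
  then have "himp x ` N \<subseteq> \<Union>F" by blast
  then show "himp x s \<in> coS_Meet F" unfolding coS_Meet_def N(1) himp_Inf by blast
qed

lemma sup_eq_top_if_open_sub_eq_closed_Meet:
  assumes "open_sub a = coS_Meet (closed_sub ` A)" and "c \<in> A"
  shows "sup a c = (top::'a::frame)"
proof -
  have "closed_sub c \<subseteq> open_sub a"
    unfolding assms(1) using assms(2) by (intro subset_coS_Meet) blast
  then show ?thesis by (simp add: closed_sub_subset_open_sub_iff)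
qed

definition nucleus :: "'a::frame set \<Rightarrow> 'a \<Rightarrow> 'a" where
  "nucleus T x = Inf {t \<in> T. x \<le> t}"

lemma nucleus_mem: "is_sublocale T \<Longrightarrow> nucleus T x \<in> T"
  unfolding is_sublocale_def nucleus_def by auto

lemma le_nucleus: "x \<le> nucleus T x"
  unfolding nucleus_def by (auto intro: Inf_greatest)

lemma nucleus_mono: "x \<le> w \<Longrightarrow> nucleus T x \<le> nucleus T w"
  unfolding nucleus_def by (rule Inf_superset_mono) (auto intro: order.trans)

lemma nucleus_open_sub: "nucleus (open_sub a) x = himp a (x::'a::frame)"
proof (rule order.antisym)
  show "nucleus (open_sub a) x \<le> himp a x"
    unfolding nucleus_def by (rule Inf_lower) (simp add: himp_mem_open_sub le_himp)
  show "himp a x \<le> nucleus (open_sub a) x"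
    unfolding nucleus_def open_sub_def by (auto intro!: Inf_greatest dest: himp_mono [of _ _ a])
qed

lemma nucleus_closed_sub: "nucleus (closed_sub a) x = sup a (x::'a::frame)"
  unfolding nucleus_def closed_sub_def by (rule order.antisym) (auto intro: Inf_lower Inf_greatest)

lemma himp_nucleus_mem_if_coS_meet_eq_UNIV:
  assumes U: "is_sublocale U" and UT: "coS_meet U T = UNIV"
  shows "himp (nucleus T x) x \<in> U"
proof -
  have "x \<in> coS_Meet {U, T}" using UT unfolding coS_meet_def by simp
  then obtain M where M: "x = Inf M" "M \<subseteq> U \<union> T" unfolding coS_Meet_def by auto
  define u where "u = Inf (M \<inter> U)"
  have "u \<in> U" using U unfolding is_sublocale_def u_def by blast
  have "M = (M \<inter> T) \<union> (M \<inter> U)" using M(2) by blast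
  then have x: "x = inf (Inf (M \<inter> T)) u" unfolding u_def M(1) by (metis Inf_union_distrib)
  have "nucleus T x \<le> Inf (M \<inter> T)"
    unfolding nucleus_def M(1) by (intro Inf_greatest Inf_lower) (auto intro: Inf_lower)
  then have "himp (nucleus T x) (inf (Inf (M \<inter> T)) u) = himp (nucleus T x) u"
    by (rule himp_inf_eq_if_le)
  also have "\<dots> \<in> U" using U \<open>u \<in> U\<close> unfolding is_sublocale_def by blast
  finally show ?thesis by (subst (2) x)
qed

lemma closed_sub_subset_if_nucleus_eq_top:
  assumes "is_sublocale U" "coS_meet U T = UNIV" and "nucleus T m = top"
  shows "closed_sub m \<subseteq> U"
proof
  fix w assume "w \<in> closed_sub m"
  then have "nucleus T w = top"
    using assms(3) nucleus_mono [of m w T] by (simp add: closed_sub_def top_unique)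
  then have "w = himp (nucleus T w) w" by (simp add: himp_top_left)
  also have "\<dots> \<in> U" using assms(1,2) by (rule himp_nucleus_mem_if_coS_meet_eq_UNIV)
  finally show "w \<in> U" .
qed

lemma coS_meet_eq_UNIV_iff:
  assumes T: "is_sublocale T" and U: "is_sublocale U"
  shows "coS_meet U T = UNIV \<longleftrightarrow> (\<forall>x. himp (nucleus T x) x \<in> U)"
proof
  assume "coS_meet U T = UNIV"
  with U show "\<forall>x. himp (nucleus T x) x \<in> U"
    by (blast intro: himp_nucleus_mem_if_coS_meet_eq_UNIV)
next
  assume H: "\<forall>x. himp (nucleus T x) x \<in> U"
  have "x \<in> coS_meet U T" for x
  proof -
    have "x = Inf {nucleus T x, himp (nucleus T x) x}"
      by (simp add: inf_himp inf_absorb2 le_nucleus)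
    moreover have "{nucleus T x, himp (nucleus T x) x} \<subseteq> \<Union>{U, T}"
      using H nucleus_mem [OF T] by blast
    ultimately show ?thesis unfolding coS_meet_def coS_Meet_def by blast
  qed
  then show "coS_meet U T = UNIV" by blast
qed

lemma coS_pc_eqI:
  assumes "is_sublocale P" "coS_meet P S = UNIV"
    and "\<And>U. is_sublocale U \<Longrightarrow> coS_meet U S = UNIV \<Longrightarrow> P \<subseteq> U"
  shows "coS_pc S = P"
  unfolding coS_pc_def by (rule the_equality) (use assms in blast, meson assms subset_antisym)

lemma
  assumes T: "is_sublocale (T::'a::frame set)"
  shows is_sublocale_coS_pc: "is_sublocale (coS_pc T)"
    and coS_meet_coS_pc: "coS_meet (coS_pc T) T = UNIV"
    and coS_pc_least: "is_sublocale U \<Longrightarrow> coS_meet U T = UNIV \<Longrightarrow> coS_pc T \<subseteq> U"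
proof -
  define P where "P = \<Inter>{U. is_sublocale U \<and> coS_meet U T = UNIV}"
  have P: "is_sublocale P" unfolding P_def by (rule is_sublocale_Inter) blast
  have "himp (nucleus T x) x \<in> P" for x
    unfolding P_def using himp_nucleus_mem_if_coS_meet_eq_UNIV by blast
  with T P have PT: "coS_meet P T = UNIV" by (simp add: coS_meet_eq_UNIV_iff)
  have least: "P \<subseteq> U" if "is_sublocale U" "coS_meet U T = UNIV" for U
    unfolding P_def using that by blast
  have "coS_pc T = P" using P PT least by (rule coS_pc_eqI)
  with P PT least show "is_sublocale (coS_pc T)" "coS_meet (coS_pc T) T = UNIV"
    "is_sublocale U \<Longrightarrow> coS_meet U T = UNIV \<Longrightarrow> coS_pc T \<subseteq> U" by simp_all
qed

lemma coS_pc_closed_sub: "coS_pc (closed_sub a) = open_sub (a::'a::frame)"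
proof (rule coS_pc_eqI [OF is_sublocale_open_sub])
  have supplement_iff: "coS_meet U (closed_sub a) = UNIV \<longleftrightarrow> (\<forall>x. himp a x \<in> U)"
    if "is_sublocale U" for U
    using coS_meet_eq_UNIV_iff [OF is_sublocale_closed_sub that]
    by (simp add: nucleus_closed_sub himp_sup_left_self)
  show "coS_meet (open_sub a) (closed_sub a) = UNIV"
    using supplement_iff [OF is_sublocale_open_sub] himp_mem_open_sub by blast
  show "open_sub a \<subseteq> U" if U: "is_sublocale U" and UT: "coS_meet U (closed_sub a) = UNIV" for U
  proof
    fix y assume "y \<in> open_sub a"
    then have "y = himp a y" by (simp add: open_sub_def)
    also have "\<dots> \<in> U" using supplement_iff [OF U] UT by blast
    finally show "y \<in> U" .
  qed
qed

lemma coS_pc_open_sub: "coS_pc (open_sub a) = closed_sub (a::'a::frame)"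
proof (rule coS_pc_eqI [OF is_sublocale_closed_sub])
  have supplement_iff: "coS_meet U (open_sub a) = UNIV \<longleftrightarrow> (\<forall>x. himp (himp a x) x \<in> U)"
    if "is_sublocale U" for U
    using coS_meet_eq_UNIV_iff [OF is_sublocale_open_sub that] by (simp add: nucleus_open_sub)
  have "a \<le> himp (himp a x) x" for x
    by (simp add: le_himp_iff inf_himp)
  then show "coS_meet (closed_sub a) (open_sub a) = UNIV"
    using supplement_iff [OF is_sublocale_closed_sub] by (simp add: closed_sub_def)
  show "closed_sub a \<subseteq> U" if U: "is_sublocale U" and UT: "coS_meet U (open_sub a) = UNIV" for U
  proof
    fix y assume "y \<in> closed_sub a"
    then have "y = himp (himp a y) y" by (simp add: closed_sub_def himp_eq_top himp_top_left)
    also have "\<dots> \<in> U" using supplement_iff [OF U] UT by blast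
    finally show "y \<in> U" .
  qed
qed

lemma open_sub_mem_Bool_coS: "open_sub (a::'a::frame) \<in> Bool_coS"
  unfolding Bool_coS_def by (simp add: is_sublocale_open_sub coS_pc_open_sub coS_pc_closed_sub)

lemma subfit_open_sub_eq_Inf:
  assumes subfit: "subfit TYPE('a::frame)" and y: "y \<in> open_sub (a::'a)"
  shows "y = Inf {sup c y | c. sup a c = top}"
proof (rule order.antisym)
  let ?z = "Inf {sup c y | c. sup a c = top}"
  show "y \<le> ?z" by (auto intro: Inf_greatest)
  have "inf ?z a \<le> y"
  proof (rule ccontr)
    assume "\<not> inf ?z a \<le> y"
    then obtain c where c: "sup (inf ?z a) c = top" "sup y c \<noteq> top"
      using subfit unfolding subfit_def by blast
    from c(1) have "sup ?z c = top" "sup a c = top" by (simp_all add: sup_inf_distrib2)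
    from \<open>sup a c = top\<close> have "?z \<le> sup c y" by (auto intro: Inf_lower)
    then have "sup ?z c \<le> sup y c" by (simp add: sup_commute le_supI1)
    with \<open>sup ?z c = top\<close> c(2) show False by (simp add: top_unique)
  qed
  then have "?z \<le> himp a y" by (simp add: le_himp_iff)
  with y show "?z \<le> y" by (simp add: open_sub_def)
qed

lemma open_sub_eq_closed_Meet_if_subfit:
  assumes "subfit TYPE('a::frame)"
  shows "open_sub (a::'a) = coS_Meet (closed_sub ` {c. sup a c = top})"
proof
  show "coS_Meet (closed_sub ` {c. sup a c = top}) \<subseteq> open_sub a"
    by (rule coS_Meet_least [OF is_sublocale_open_sub], erule imageE)
       (simp add: closed_sub_subset_open_sub_iff)
  show "open_sub a \<subseteq> coS_Meet (closed_sub ` {c. sup a c = top})"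
  proof
    fix y assume "y \<in> open_sub a"
    with assms have "y = Inf {sup c y | c. sup a c = top}" by (rule subfit_open_sub_eq_Inf)
    moreover have "{sup c y | c. sup a c = top} \<subseteq> \<Union>(closed_sub ` {c. sup a c = top})"
      by (auto simp: closed_sub_def)
    ultimately show "y \<in> coS_Meet (closed_sub ` {c. sup a c = top})"
      unfolding coS_Meet_def by blast
  qed
qed

lemma subfit_if_open_sub_closed_Meet:
  assumes opens_closed_Meet: "\<And>a::'a::frame. \<exists>A. open_sub a = coS_Meet (closed_sub ` A)"
  shows "subfit TYPE('a)"
  unfolding subfit_def
proof (intro allI impI)
  fix a b :: 'a assume "\<not> a \<le> b"
  show "\<exists>c. sup a c = top \<and> sup b c \<noteq> top"
  proof (rule ccontr)
    assume no_sep: "\<nexists>c. sup a c = top \<and> sup b c \<noteq> top"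
    obtain A where A: "open_sub a = coS_Meet (closed_sub ` A)" using opens_closed_Meet by blast
    have "himp a b = Inf {m \<in> \<Union>(closed_sub ` A). himp a b \<le> m}"
      using himp_mem_open_sub [of a b] unfolding A mem_coS_Meet_iff .
    also have "\<dots> = top" unfolding Inf_top_conv
    proof (intro ballI, elim CollectE conjE)
      fix m assume m: "m \<in> \<Union>(closed_sub ` A)" "himp a b \<le> m"
      obtain c where "c \<in> A" "c \<le> m" using m(1) by (auto simp: closed_sub_def)
      from A \<open>c \<in> A\<close> have "sup a c = top" by (rule sup_eq_top_if_open_sub_eq_closed_Meet)
      with no_sep have "sup b c = top" by blast
      moreover have "b \<le> m" using le_himp m(2) by (rule order.trans)
      ultimately show "m = top" using \<open>c \<le> m\<close> by (metis le_supI top_unique)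
    qed
    finally have "himp a b = top" .
    with \<open>\<not> a \<le> b\<close> show False using le_himp_iff [of top a b] by simp
  qed
qed

lemma closed_Meet_supplement:
  assumes opens_closed_Meet: "\<And>a::'a::frame. \<exists>A. open_sub a = coS_Meet (closed_sub ` A)"
    and T: "is_sublocale T" and U: "is_sublocale U" and UT: "coS_meet U T = (UNIV::'a set)"
  shows "coS_meet (coS_Meet (closed_sub ` {a. closed_sub a \<subseteq> U})) T = UNIV"
proof -
  let ?K = "coS_Meet (closed_sub ` {a. closed_sub a \<subseteq> U})"
  have K: "is_sublocale ?K" by (rule is_sublocale_coS_Meet) (auto intro: is_sublocale_closed_sub)
  have "himp (nucleus T x) x \<in> ?K" for x
  proof -
    let ?n = "nucleus T x" and ?g = "himp (nucleus T x) x"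
    obtain A where A: "open_sub ?n = coS_Meet (closed_sub ` A)" using opens_closed_Meet by blast
    have "m \<in> ?K" if m: "m \<in> \<Union>(closed_sub ` A)" "?g \<le> m" for m
    proof -
      obtain c where "c \<in> A" "c \<le> m" using m(1) by (auto simp: closed_sub_def)
      from A \<open>c \<in> A\<close> have nc: "sup ?n c = top" by (rule sup_eq_top_if_open_sub_eq_closed_Meet)
      have "x \<le> m" using le_himp m(2) by (rule order.trans)
      then have "?n \<le> nucleus T m" by (rule nucleus_mono)
      moreover have "c \<le> nucleus T m" using \<open>c \<le> m\<close> le_nucleus by (rule order.trans)
      ultimately have "sup ?n c \<le> nucleus T m" by (rule le_supI)
      with nc have "nucleus T m = top" by (simp add: top_unique)
      with U UT have "closed_sub m \<subseteq> U" by (rule closed_sub_subset_if_nucleus_eq_top)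
      then show "m \<in> ?K" by (intro subsetD [OF subset_coS_Meet]) (auto simp: closed_sub_def)
    qed
    then have "{m \<in> \<Union>(closed_sub ` A). ?g \<le> m} \<subseteq> ?K" by blast
    with K have "Inf {m \<in> \<Union>(closed_sub ` A). ?g \<le> m} \<in> ?K" by (simp add: is_sublocale_def)
    moreover have "?g = Inf {m \<in> \<Union>(closed_sub ` A). ?g \<le> m}"
      using himp_mem_open_sub [of ?n x] unfolding A mem_coS_Meet_iff .
    ultimately show ?thesis by simp
  qed
  with T K show ?thesis by (simp add: coS_meet_eq_UNIV_iff)
qed

lemma Bool_coS_eq_closed_Meet:
  assumes opens_closed_Meet: "\<And>a::'a::frame. \<exists>A. open_sub a = coS_Meet (closed_sub ` A)"
    and S: "S \<in> (Bool_coS::'a set set)"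
  shows "S = coS_Meet (closed_sub ` {a. closed_sub a \<subseteq> S})"
    (is "S = ?K")
proof
  from S have Ss: "is_sublocale S" and SS: "coS_pc (coS_pc S) = S"
    by (simp_all add: Bool_coS_def)
  let ?T = "coS_pc S"
  have T: "is_sublocale ?T" using Ss by (rule is_sublocale_coS_pc)
  have "coS_meet S ?T = UNIV" using coS_meet_coS_pc [OF T] SS by simp
  with opens_closed_Meet T Ss have "coS_meet ?K ?T = UNIV" by (rule closed_Meet_supplement)
  moreover have "is_sublocale ?K"
    by (rule is_sublocale_coS_Meet) (auto intro: is_sublocale_closed_sub)
  ultimately have "coS_pc ?T \<subseteq> ?K" using T by (intro coS_pc_least)
  with SS show "S \<subseteq> ?K" by simp
  show "?K \<subseteq> S" using Ss by (rule coS_Meet_least) blast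
qed

theorem lemma4p3:
  shows "subfit TYPE('a::frame) \<longleftrightarrow>
    (\<forall>S \<in> (Bool_coS :: 'a set set). \<exists>A :: 'a set. S = coS_Meet (closed_sub ` A))"
proof
  assume "subfit TYPE('a)"
  then have "\<exists>A. open_sub a = coS_Meet (closed_sub ` A)" for a :: 'a
    using open_sub_eq_closed_Meet_if_subfit by blast
  then show "\<forall>S \<in> (Bool_coS :: 'a set set). \<exists>A. S = coS_Meet (closed_sub ` A)"
    using Bool_coS_eq_closed_Meet by blast
next
  assume Bool_closed: "\<forall>S \<in> (Bool_coS :: 'a set set). \<exists>A. S = coS_Meet (closed_sub ` A)"
  have "\<exists>A. open_sub a = coS_Meet (closed_sub ` A)" for a :: 'a
    using Bool_closed open_sub_mem_Bool_coS by blast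
  then show "subfit TYPE('a)" by (rule subfit_if_open_sub_closed_Meet)
qed

end
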